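(* (a) Let $F',F''$ be first-order formulas over $L=\{A_1,\dots,A_n\}\cup\{f_1,\dots,f_m\}$ (without $*$). Then $F'*F''$ is satisfiable iff the first-order formula over the vocabulary $L\cup\{A'_i,A''_i\}_{i\le n}\cup\{f'_i,f''_i\}_{i\le m}$ (fresh unary $A'_i,A''_i$, fresh binary $f'_i,f''_i$) $$\bigwedge_{i=1}^n\forall x.\big((A_i(x)\leftrightarrow A'_i(x)\vee A''_i(x))\wedge\neg(A'_i(x)\wedge A''_i(x))\big)\wedge\bigwedge_{i=1}^m\forall x\,y.\big((f_i(x,y)\leftrightarrow f'_i(x,y)\vee f''_i(x,y))\wedge\neg(f'_i(x,y)\wedge f''_i(x,y))\big)\wedge F'[A_i:=A'_i,f_i:=f'_i]\wedge F''[A_i:=A''_i,f_i:=f''_i]$$ is satisfiable. (b) Let $\mathcal I$ be the smallest class of formulas containing all formulas of two-variable first-order logic with counting $C^2$ over $L$ and closed under $F_1,F_2\mapsto F_1*F_2$ and $F_1,F_2\mapsto F_1\vee F_2$. Then satisfiability of formulas in $\mathcal I$ is decidable: each $F\in\mathcal I$ is equisatisfiable with an effectively computable $C^2$ formula over an extended vocabulary.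
   Context: Formulas are first-order logic with equality (and, where stated, counting quantifiers $\exists^{\ge k}x.G$, $\exists^{=k}x.G$) over a finite vocabulary of unary and binary predicate symbols; equality is interpreted as identity and is not split. Environments (structures) have finite nonempty domains; satisfiable means true in some such environment. Spatial conjunction: $F_1*F_2$ holds in $e$ iff there are $e_1,e_2$ with the same domain and variable assignment such that each predicate symbol's interpretation in $e$ is the disjoint union of its interpretations in $e_1$ and $e_2$, with $F_1$ true in $e_1$ and $F_2$ true in $e_2$. $G[P:=Q]$ denotes syntactic replacement of the symbol $P$ by $Q$. $C^2$ is the set of first-order formulas with counting quantifiers that use only two variable names (which may be reused by nested quantification); satisfiability of $C^2$ formulas (over finite structures) is decidable. *)

theory Defs
  imports Main
begin

text \<open>Variables, unary predicate symbols and binary predicate symbols are all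
named by natural numbers (unary and binary symbols live in separate name spaces).\<close>

datatype fm =
    Top
  | UPred nat nat
  | Bin nat nat nat
  | Eq nat nat
  | Neg fm
  | Conj fm fm
  | Disj fm fm
  | Ex nat fm
  | All nat fm
  | CntGe nat nat fm
  | CntEq nat nat fm
  | Star fm fm

definition Iff :: "fm \<Rightarrow> fm \<Rightarrow> fm" where
  "Iff p q = Conj (Disj (Neg p) q) (Disj (Neg q) p)"

fun sem :: "nat set \<Rightarrow> (nat \<Rightarrow> nat set) \<Rightarrow> (nat \<Rightarrow> (nat \<times> nat) set) \<Rightarrow> (nat \<Rightarrow> nat) \<Rightarrow> fm \<Rightarrow> bool" where
  "sem D U B v Top = True"
| "sem D U B v (UPred a x) = (v x \<in> U a)"
| "sem D U B v (Bin f x y) = ((v x, v y) \<in> B f)"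
| "sem D U B v (Eq x y) = (v x = v y)"
| "sem D U B v (Neg p) = (\<not> sem D U B v p)"
| "sem D U B v (Conj p q) = (sem D U B v p \<and> sem D U B v q)"
| "sem D U B v (Disj p q) = (sem D U B v p \<or> sem D U B v q)"
| "sem D U B v (Ex x p) = (\<exists>d\<in>D. sem D U B (v(x := d)) p)"
| "sem D U B v (All x p) = (\<forall>d\<in>D. sem D U B (v(x := d)) p)"
| "sem D U B v (CntGe k x p) = (card {d\<in>D. sem D U B (v(x := d)) p} \<ge> k)"
| "sem D U B v (CntEq k x p) = (card {d\<in>D. sem D U B (v(x := d)) p} = k)"
| "sem D U B v (Star p q) =
     (\<exists>U1 U2 B1 B2.
        (\<forall>a. U a = U1 a \<union> U2 a \<and> U1 a \<inter> U2 a = {}) \<and>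
        (\<forall>f. B f = B1 f \<union> B2 f \<and> B1 f \<inter> B2 f = {}) \<and>
        sem D U1 B1 v p \<and> sem D U2 B2 v q)"

definition env_ok :: "nat set \<Rightarrow> (nat \<Rightarrow> nat set) \<Rightarrow> (nat \<Rightarrow> (nat \<times> nat) set) \<Rightarrow> (nat \<Rightarrow> nat) \<Rightarrow> bool" where
  "env_ok D U B v \<longleftrightarrow> finite D \<and> D \<noteq> {} \<and> (\<forall>a. U a \<subseteq> D) \<and> (\<forall>f. B f \<subseteq> D \<times> D) \<and> (\<forall>x. v x \<in> D)"

definition sat :: "fm \<Rightarrow> bool" where
  "sat F \<longleftrightarrow> (\<exists>D U B v. env_ok D U B v \<and> sem D U B v F)"

fun usyms :: "fm \<Rightarrow> nat set" where
  "usyms Top = {}"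
| "usyms (UPred a x) = {a}"
| "usyms (Bin f x y) = {}"
| "usyms (Eq x y) = {}"
| "usyms (Neg p) = usyms p"
| "usyms (Conj p q) = usyms p \<union> usyms q"
| "usyms (Disj p q) = usyms p \<union> usyms q"
| "usyms (Ex x p) = usyms p"
| "usyms (All x p) = usyms p"
| "usyms (CntGe k x p) = usyms p"
| "usyms (CntEq k x p) = usyms p"
| "usyms (Star p q) = usyms p \<union> usyms q"

fun bsyms :: "fm \<Rightarrow> nat set" where
  "bsyms Top = {}"
| "bsyms (UPred a x) = {}"
| "bsyms (Bin f x y) = {f}"
| "bsyms (Eq x y) = {}"
| "bsyms (Neg p) = bsyms p"
| "bsyms (Conj p q) = bsyms p \<union> bsyms q"
| "bsyms (Disj p q) = bsyms p \<union> bsyms q"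
| "bsyms (Ex x p) = bsyms p"
| "bsyms (All x p) = bsyms p"
| "bsyms (CntGe k x p) = bsyms p"
| "bsyms (CntEq k x p) = bsyms p"
| "bsyms (Star p q) = bsyms p \<union> bsyms q"

fun vars :: "fm \<Rightarrow> nat set" where
  "vars Top = {}"
| "vars (UPred a x) = {x}"
| "vars (Bin f x y) = {x, y}"
| "vars (Eq x y) = {x, y}"
| "vars (Neg p) = vars p"
| "vars (Conj p q) = vars p \<union> vars q"
| "vars (Disj p q) = vars p \<union> vars q"
| "vars (Ex x p) = insert x (vars p)"
| "vars (All x p) = insert x (vars p)"
| "vars (CntGe k x p) = insert x (vars p)"
| "vars (CntEq k x p) = insert x (vars p)"
| "vars (Star p q) = vars p \<union> vars q"

fun star_free :: "fm \<Rightarrow> bool" where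
  "star_free (Neg p) = star_free p"
| "star_free (Conj p q) = (star_free p \<and> star_free q)"
| "star_free (Disj p q) = (star_free p \<and> star_free q)"
| "star_free (Ex x p) = star_free p"
| "star_free (All x p) = star_free p"
| "star_free (CntGe k x p) = star_free p"
| "star_free (CntEq k x p) = star_free p"
| "star_free (Star p q) = False"
| "star_free _ = True"

text \<open>C^2: first-order formulas with counting quantifiers (no spatial conjunction)
using only the two variable names x = 0 and y = 1.\<close>
definition C2 :: "fm \<Rightarrow> bool" where
  "C2 F \<longleftrightarrow> star_free F \<and> vars F \<subseteq> {0, 1}"

fun rename :: "(nat \<Rightarrow> nat) \<Rightarrow> (nat \<Rightarrow> nat) \<Rightarrow> fm \<Rightarrow> fm" where
  "rename \<sigma> \<tau> Top = Top"
| "rename \<sigma> \<tau> (UPred a x) = UPred (\<sigma> a) x"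
| "rename \<sigma> \<tau> (Bin f x y) = Bin (\<tau> f) x y"
| "rename \<sigma> \<tau> (Eq x y) = Eq x y"
| "rename \<sigma> \<tau> (Neg p) = Neg (rename \<sigma> \<tau> p)"
| "rename \<sigma> \<tau> (Conj p q) = Conj (rename \<sigma> \<tau> p) (rename \<sigma> \<tau> q)"
| "rename \<sigma> \<tau> (Disj p q) = Disj (rename \<sigma> \<tau> p) (rename \<sigma> \<tau> q)"
| "rename \<sigma> \<tau> (Ex x p) = Ex x (rename \<sigma> \<tau> p)"
| "rename \<sigma> \<tau> (All x p) = All x (rename \<sigma> \<tau> p)"
| "rename \<sigma> \<tau> (CntGe k x p) = CntGe k x (rename \<sigma> \<tau> p)"
| "rename \<sigma> \<tau> (CntEq k x p) = CntEq k x (rename \<sigma> \<tau> p)"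
| "rename \<sigma> \<tau> (Star p q) = Star (rename \<sigma> \<tau> p) (rename \<sigma> \<tau> q)"

definition repl :: "nat list \<Rightarrow> nat list \<Rightarrow> nat \<Rightarrow> nat" where
  "repl xs ys a = (case map_of (zip xs ys) a of Some b \<Rightarrow> b | None \<Rightarrow> a)"

definition bigconj :: "fm list \<Rightarrow> fm" where
  "bigconj Fs = foldr Conj Fs Top"

definition part_u :: "nat \<Rightarrow> nat \<Rightarrow> nat \<Rightarrow> fm" where
  "part_u A A1 A2 = All 0 (Conj (Iff (UPred A 0) (Disj (UPred A1 0) (UPred A2 0)))
                                (Neg (Conj (UPred A1 0) (UPred A2 0))))"

definition part_b :: "nat \<Rightarrow> nat \<Rightarrow> nat \<Rightarrow> fm" where
  "part_b f f1 f2 = All 0 (All 1 (Conj (Iff (Bin f 0 1) (Disj (Bin f1 0 1) (Bin f2 0 1)))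
                                       (Neg (Conj (Bin f1 0 1) (Bin f2 0 1)))))"

definition sep_fm :: "nat list \<Rightarrow> nat list \<Rightarrow> nat list \<Rightarrow> nat list \<Rightarrow> nat list \<Rightarrow> nat list \<Rightarrow> fm \<Rightarrow> fm \<Rightarrow> fm" where
  "sep_fm As As1 As2 fs fs1 fs2 F1 F2 =
     Conj (bigconj (map (\<lambda>i. part_u (As ! i) (As1 ! i) (As2 ! i)) [0..<length As]))
      (Conj (bigconj (map (\<lambda>i. part_b (fs ! i) (fs1 ! i) (fs2 ! i)) [0..<length fs]))
        (Conj (rename (repl As As1) (repl fs fs1) F1)
              (rename (repl As As2) (repl fs fs2) F2)))"

inductive inI :: "fm \<Rightarrow> bool" where
  base: "C2 F \<Longrightarrow> inI F"
| star: "inI F1 \<Longrightarrow> inI F2 \<Longrightarrow> inI (Star F1 F2)"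
| disj: "inI F1 \<Longrightarrow> inI F2 \<Longrightarrow> inI (Disj F1 F2)"

text \<open>trans k F: fresh symbols are allocated from the counter k upwards; returns the
translated formula and the next unused counter value.\<close>
fun trans :: "nat \<Rightarrow> fm \<Rightarrow> fm \<times> nat" where
  "trans k (Star p q) =
     (let (g1, k1) = trans k p; (g2, k2) = trans k1 q;
          Lu = sorted_list_of_set (usyms p \<union> usyms q);
          Lb = sorted_list_of_set (bsyms p \<union> bsyms q);
          n = length Lu; m = length Lb
      in (sep_fm Lu [k2..<k2+n] [k2+n..<k2+2*n] Lb [k2..<k2+m] [k2+m..<k2+2*m] g1 g2,
          k2 + 2*n + 2*m))"
| "trans k (Disj p q) =
     (if C2 (Disj p q) then (Disj p q, k)
      else (let (g1, k1) = trans k p; (g2, k2) = trans k1 q in (Disj g1 g2, k2)))"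
| "trans k F = (F, k)"

definition translate :: "fm \<Rightarrow> fm" where
  "translate F = fst (trans (Suc (max (Max (insert 0 (usyms F))) (Max (insert 0 (bsyms F))))) F)"

end

theory Submission
  imports Defs
begin

(*
  Part (a): a decomposition U = U1 + U2 of the interpretation of a symbol A into
  disjoint halves can be stored in two fresh copies A', A''.  The partition axioms
  say exactly that the copies split A, and after renaming A to A' (resp. A'') each
  conjunct reads its own half.

  Part (b): by induction on I, the translation G of F is a C^2 formula such that
  F is equivalent to the second-order formula "exists X. G", where X is the block
  of fresh symbols allocated while translating F.  This existential quantifier
  commutes with disjunction, and with spatial conjunction provided the two sides
  use disjoint blocks; the star is then eliminated as in (a), relative to the
  symbols of F.  The partition axioms use only two variables, so G stays in C^2.
*)

section \<open>Splits and copies of interpretations\<close>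

definition eq_outside :: "'a set \<Rightarrow> ('a \<Rightarrow> 'b) \<Rightarrow> ('a \<Rightarrow> 'b) \<Rightarrow> bool" where
  "eq_outside X f g \<longleftrightarrow> (\<forall>a. a \<notin> X \<longrightarrow> f a = g a)"

lemma eq_outside_mono: "eq_outside X f g \<Longrightarrow> X \<subseteq> Y \<Longrightarrow> eq_outside Y f g"
  by (auto simp: eq_outside_def)

lemma eq_outside_empty [simp]: "eq_outside {} f g \<longleftrightarrow> f = g"
  by (auto simp: eq_outside_def)

definition splits_on :: "'a set \<Rightarrow> ('a \<Rightarrow> 'b set) \<Rightarrow> ('a \<Rightarrow> 'b set) \<Rightarrow> ('a \<Rightarrow> 'b set) \<Rightarrow> bool" where
  "splits_on A U U1 U2 \<longleftrightarrow> (\<forall>a\<in>A. U a = U1 a \<union> U2 a \<and> U1 a \<inter> U2 a = {})"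

definition copies :: "nat list \<Rightarrow> nat list \<Rightarrow> nat list \<Rightarrow> bool" where
  "copies As As1 As2 \<longleftrightarrow>
     distinct (As @ As1 @ As2) \<and> length As1 = length As \<and> length As2 = length As"

lemma copies_upt:
  "distinct As \<Longrightarrow> set As \<subseteq> {..<k} \<Longrightarrow>
   copies As [k..<k + length As] [k + length As..<k + 2 * length As]"
  by (auto simp: copies_def)

lemma repl_nth: "distinct xs \<Longrightarrow> length ys = length xs \<Longrightarrow> i < length xs \<Longrightarrow> repl xs ys (xs ! i) = ys ! i"
  unfolding repl_def by (simp add: map_of_zip_nth)

lemma repl_notin: "a \<notin> set xs \<Longrightarrow> repl xs ys a = a"
  unfolding repl_def by (auto dest: map_of_SomeD set_zip_leftD split: option.split)

lemma repl_image_subset: "repl xs ys ` S \<subseteq> S \<union> set ys"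
proof -
  have "repl xs ys a = a \<or> repl xs ys a \<in> set ys" for a
    unfolding repl_def by (cases "map_of (zip xs ys) a") (auto dest: map_of_SomeD set_zip_rightD)
  then show ?thesis by (metis UnI1 UnI2 image_subsetI)
qed

lemma repl_in_set: "distinct xs \<Longrightarrow> length ys = length xs \<Longrightarrow> a \<in> set xs \<Longrightarrow> repl xs ys a \<in> set ys"
  by (metis in_set_conv_nth repl_nth nth_mem)

lemma repl_repl:
  "distinct xs \<Longrightarrow> distinct ys \<Longrightarrow> length ys = length xs \<Longrightarrow> a \<in> set xs \<Longrightarrow> repl ys xs (repl xs ys a) = a"
  by (metis in_set_conv_nth repl_nth)

lemma splits_on_copies_iff:
  assumes "copies As As1 As2"
  shows "splits_on (set As) U (U \<circ> repl As As1) (U \<circ> repl As As2) \<longleftrightarrow>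
    (\<forall>i<length As. U (As ! i) = U (As1 ! i) \<union> U (As2 ! i) \<and> U (As1 ! i) \<inter> U (As2 ! i) = {})"
  using assms by (simp add: splits_on_def copies_def all_set_conv_all_nth repl_nth)

lemma copies_of_splits_on:
  fixes U U1 U2 U1' U2' :: "nat \<Rightarrow> 'b set"
  assumes cp: "copies As As1 As2"
    and X: "X1 \<inter> X2 = {}" "(X1 \<union> X2) \<inter> (set As \<union> set As1 \<union> set As2) = {}"
      "X1 \<union> X2 \<union> set As1 \<union> set As2 \<subseteq> X"
    and split: "splits_on UNIV U U1 U2" and eq: "eq_outside X1 U1 U1'" "eq_outside X2 U2 U2'"
    and S: "\<forall>a. U a \<subseteq> S" "\<forall>a. U1' a \<subseteq> S" "\<forall>a. U2' a \<subseteq> S"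
  obtains V where "eq_outside X U V" "splits_on (set As) V (V \<circ> repl As As1) (V \<circ> repl As As2)"
    "\<forall>a\<in>set As \<union> X1. V (repl As As1 a) = U1' a" "\<forall>a\<in>set As \<union> X2. V (repl As As2 a) = U2' a"
    "\<forall>a. V a \<subseteq> S"
proof
  have dist: "distinct As" "distinct As1" "distinct As2"
    and disj: "set As \<inter> set As1 = {}" "set As \<inter> set As2 = {}" "set As1 \<inter> set As2 = {}"
    and len: "length As1 = length As" "length As2 = length As"
    using cp by (auto simp: copies_def)
  define V where "V a = (if a \<in> X1 then U1' a else if a \<in> X2 then U2' a
      else if a \<in> set As1 then U1 (repl As1 As a) else if a \<in> set As2 then U2 (repl As2 As a)
      else U a)" for a
  show "eq_outside X U V"
    using X(3) by (auto simp: eq_outside_def V_def)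
  have fresh: "a \<notin> set As" "a \<notin> set As1" "a \<notin> set As2" if "a \<in> X1 \<union> X2" for a
    using that X(2) by auto
  have V1: "V (repl As As1 a) = U1' a" if "a \<in> set As \<union> X1" for a
    using that fresh[of a] fresh[of "repl As As1 a"] repl_in_set[of As As1 a] eq(1) dist len
    by (cases "a \<in> X1") (auto simp: V_def eq_outside_def repl_notin repl_repl)
  have V2: "V (repl As As2 a) = U2' a" if "a \<in> set As \<union> X2" for a
    using that fresh[of a] fresh[of "repl As As2 a"] repl_in_set[of As As2 a] X(1) disj(3) eq(2)
      dist len by (cases "a \<in> X2") (auto simp: V_def eq_outside_def repl_notin repl_repl)
  show "\<forall>a\<in>set As \<union> X1. V (repl As As1 a) = U1' a"
    "\<forall>a\<in>set As \<union> X2. V (repl As As2 a) = U2' a"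
    using V1 V2 by blast+
  show "splits_on (set As) V (V \<circ> repl As As1) (V \<circ> repl As As2)"
    unfolding splits_on_def
  proof
    fix a assume a: "a \<in> set As"
    then have "V a = U a" "U1' a = U1 a" "U2' a = U2 a"
      using X(2) disj eq by (auto simp: V_def eq_outside_def)
    then show "V a = (V \<circ> repl As As1) a \<union> (V \<circ> repl As As2) a \<and>
        (V \<circ> repl As As1) a \<inter> (V \<circ> repl As As2) a = {}"
      using a V1 V2 split by (simp add: splits_on_def)
  qed
  show "\<forall>a. V a \<subseteq> S"
    using S split by (auto simp: V_def splits_on_def)
qed

lemma splits_on_of_copies:
  fixes U V :: "nat \<Rightarrow> 'b set"
  assumes X: "eq_outside X U V" "X \<inter> set As = {}" "X1 \<inter> set As = {}" "X2 \<inter> set As = {}"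
    and split: "splits_on (set As) V (V \<circ> repl As As1) (V \<circ> repl As As2)"
    and S: "\<forall>a. U a \<subseteq> S" "\<forall>a. V a \<subseteq> S"
  obtains U1 U2 U1' U2' where "splits_on UNIV U U1 U2"
    "eq_outside X1 U1 U1'" "eq_outside X2 U2 U2'"
    "\<forall>a\<in>set As \<union> X1. U1' a = V (repl As As1 a)" "\<forall>a\<in>set As \<union> X2. U2' a = V (repl As As2 a)"
    "\<forall>a. U1' a \<subseteq> S" "\<forall>a. U2' a \<subseteq> S"
proof
  define U1 where "U1 a = (if a \<in> set As then V (repl As As1 a) else U a)" for a
  define U2 where "U2 a = (if a \<in> set As then V (repl As As2 a) else {})" for a
  define U1' where "U1' a = (if a \<in> X1 then V a else U1 a)" for a
  define U2' where "U2' a = (if a \<in> X2 then V a else U2 a)" for a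
  show "splits_on UNIV U U1 U2"
    using X(1,2) split by (auto simp: splits_on_def eq_outside_def U1_def U2_def)
  show "eq_outside X1 U1 U1'" "eq_outside X2 U2 U2'"
    by (auto simp: eq_outside_def U1'_def U2'_def)
  show "\<forall>a\<in>set As \<union> X1. U1' a = V (repl As As1 a)" "\<forall>a\<in>set As \<union> X2. U2' a = V (repl As As2 a)"
    using X(3,4) by (auto simp: U1'_def U2'_def U1_def U2_def repl_notin)
  show "\<forall>a. U1' a \<subseteq> S" "\<forall>a. U2' a \<subseteq> S"
    using S by (auto simp: U1'_def U2'_def U1_def U2_def)
qed

lemma finite_syms: "finite (usyms F)" "finite (bsyms F)"
  by (induction F) auto

lemma rename_simps:
  "star_free (rename \<sigma> \<tau> F) = star_free F" "vars (rename \<sigma> \<tau> F) = vars F"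
  "usyms (rename \<sigma> \<tau> F) = \<sigma> ` usyms F" "bsyms (rename \<sigma> \<tau> F) = \<tau> ` bsyms F"
  by (induction F) auto

lemma bigconj_simps:
  "star_free (bigconj Fs) = (\<forall>F\<in>set Fs. star_free F)"
  "vars (bigconj Fs) = (\<Union>F\<in>set Fs. vars F)"
  "usyms (bigconj Fs) = (\<Union>F\<in>set Fs. usyms F)"
  "bsyms (bigconj Fs) = (\<Union>F\<in>set Fs. bsyms F)"
  by (induction Fs) (auto simp: bigconj_def)

lemma Iff_simps [simp]:
  "sem D U B v (Iff p q) = (sem D U B v p = sem D U B v q)"
  "star_free (Iff p q) = (star_free p \<and> star_free q)"
  "vars (Iff p q) = vars p \<union> vars q" "usyms (Iff p q) = usyms p \<union> usyms q"
  "bsyms (Iff p q) = bsyms p \<union> bsyms q"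
  by (auto simp: Iff_def)

lemma part_simps [simp]:
  "star_free (part_u A A1 A2)" "vars (part_u A A1 A2) = {0}"
  "usyms (part_u A A1 A2) = {A, A1, A2}" "bsyms (part_u A A1 A2) = {}"
  "star_free (part_b f f1 f2)" "vars (part_b f f1 f2) = {0, 1}"
  "usyms (part_b f f1 f2) = {}" "bsyms (part_b f f1 f2) = {f, f1, f2}"
  by (auto simp: part_u_def part_b_def)

lemma sem_cong:
  "star_free F \<Longrightarrow> (\<forall>a\<in>usyms F. U a = U' a) \<Longrightarrow> (\<forall>f\<in>bsyms F. B f = B' f)
   \<Longrightarrow> sem D U B v F = sem D U' B' v F"
  by (induction F arbitrary: v) auto

lemma sem_rename:
  "star_free F \<Longrightarrow> sem D U B v (rename \<sigma> \<tau> F) = sem D (U \<circ> \<sigma>) (B \<circ> \<tau>) v F"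
  by (induction F arbitrary: v) auto

lemma sem_bigconj: "sem D U B v (bigconj Fs) \<longleftrightarrow> (\<forall>F\<in>set Fs. sem D U B v F)"
  by (induction Fs) (auto simp: bigconj_def)

lemma sem_Star_splits_on:
  "sem D U B v (Star p q) \<longleftrightarrow>
     (\<exists>U1 U2 B1 B2. splits_on UNIV U U1 U2 \<and> splits_on UNIV B B1 B2 \<and>
        sem D U1 B1 v p \<and> sem D U2 B2 v q)"
  by (simp add: splits_on_def)

lemma env_ok_splits_on:
  assumes "env_ok D U B v" "splits_on UNIV U U1 U2" "splits_on UNIV B B1 B2"
  shows "env_ok D U1 B1 v" "env_ok D U2 B2 v"
  using assms unfolding env_ok_def splits_on_def by blast+

lemma sem_part_u:
  "(\<forall>a. U a \<subseteq> D) \<Longrightarrow>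
   sem D U B v (part_u A A1 A2) \<longleftrightarrow> U A = U A1 \<union> U A2 \<and> U A1 \<inter> U A2 = {}"
  unfolding part_u_def by simp blast

lemma sem_part_b:
  "(\<forall>f. B f \<subseteq> D \<times> D) \<Longrightarrow>
   sem D U B v (part_b f f1 f2) \<longleftrightarrow> B f = B f1 \<union> B f2 \<and> B f1 \<inter> B f2 = {}"
  unfolding part_b_def by simp blast

lemma sem_sep_fm:
  assumes "copies As As1 As2" "copies fs fs1 fs2" "star_free G1" "star_free G2"
    and "\<forall>a. U a \<subseteq> D" "\<forall>f. B f \<subseteq> D \<times> D"
  shows "sem D U B v (sep_fm As As1 As2 fs fs1 fs2 G1 G2) \<longleftrightarrow>
    splits_on (set As) U (U \<circ> repl As As1) (U \<circ> repl As As2) \<and>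
    splits_on (set fs) B (B \<circ> repl fs fs1) (B \<circ> repl fs fs2) \<and>
    sem D (U \<circ> repl As As1) (B \<circ> repl fs fs1) v G1 \<and>
    sem D (U \<circ> repl As As2) (B \<circ> repl fs fs2) v G2"
  using assms
  by (auto simp: sep_fm_def sem_bigconj sem_rename sem_part_u sem_part_b splits_on_copies_iff)

lemma C2_sep_fm: "C2 G1 \<Longrightarrow> C2 G2 \<Longrightarrow> C2 (sep_fm As As1 As2 fs fs1 fs2 G1 G2)"
  by (auto simp: C2_def sep_fm_def bigconj_simps rename_simps)

lemma syms_sep_fm:
  assumes "length As1 = length As" "length As2 = length As"
    "length fs1 = length fs" "length fs2 = length fs"
  shows "usyms (sep_fm As As1 As2 fs fs1 fs2 G1 G2) \<subseteq>
      set As \<union> set As1 \<union> set As2 \<union> usyms G1 \<union> usyms G2"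
    "bsyms (sep_fm As As1 As2 fs fs1 fs2 G1 G2) \<subseteq>
      set fs \<union> set fs1 \<union> set fs2 \<union> bsyms G1 \<union> bsyms G2"
  using assms repl_image_subset[of As As1 "usyms G1"] repl_image_subset[of As As2 "usyms G2"]
    repl_image_subset[of fs fs1 "bsyms G1"] repl_image_subset[of fs fs2 "bsyms G2"]
  by (auto simp: sep_fm_def bigconj_simps rename_simps dest: nth_mem)

section \<open>Existential quantification of fresh symbols\<close>

definition sem_ex ::
  "nat set \<Rightarrow> nat set \<Rightarrow> nat set \<Rightarrow> (nat \<Rightarrow> nat set) \<Rightarrow> (nat \<Rightarrow> (nat \<times> nat) set) \<Rightarrow>
    (nat \<Rightarrow> nat) \<Rightarrow> fm \<Rightarrow> bool"
  where "sem_ex X Y D U B v G \<longleftrightarrow>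
    (\<exists>U' B'. eq_outside X U U' \<and> eq_outside Y B B' \<and> env_ok D U' B' v \<and> sem D U' B' v G)"

definition equiv_ex :: "nat set \<Rightarrow> nat set \<Rightarrow> fm \<Rightarrow> fm \<Rightarrow> bool" where
  "equiv_ex X Y F G \<longleftrightarrow>
    (\<forall>D U B v. env_ok D U B v \<longrightarrow> (sem D U B v F \<longleftrightarrow> sem_ex X Y D U B v G))"

lemma equiv_ex_refl: "equiv_ex {} {} F F"
  by (simp add: equiv_ex_def sem_ex_def)

lemma equiv_ex_sat_iff:
  assumes "equiv_ex X Y F G"
  shows "sat F \<longleftrightarrow> sat G"
proof
  assume "sat F"
  then obtain D U B v where "env_ok D U B v" "sem D U B v F" by (auto simp: sat_def)
  with assms show "sat G" by (auto simp: equiv_ex_def sem_ex_def sat_def)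
next
  assume "sat G"
  then obtain D U B v where env: "env_ok D U B v" and "sem D U B v G" by (auto simp: sat_def)
  then have "sem_ex X Y D U B v G" by (auto simp: sem_ex_def eq_outside_def)
  with assms env show "sat F" unfolding equiv_ex_def sat_def by blast
qed

lemma sem_ex_restrict:
  assumes env: "env_ok D U B v" and G: "star_free G"
    and X: "X1 \<subseteq> X" "usyms G \<inter> X \<subseteq> X1" and Y: "Y1 \<subseteq> Y" "bsyms G \<inter> Y \<subseteq> Y1"
  shows "sem_ex X Y D U B v G \<longleftrightarrow> sem_ex X1 Y1 D U B v G"
proof
  assume "sem_ex X Y D U B v G"
  then obtain U' B' where eq: "eq_outside X U U'" "eq_outside Y B B'"
    and env': "env_ok D U' B' v" and sem: "sem D U' B' v G"
    by (auto simp: sem_ex_def)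
  define U'' where "U'' a = (if a \<in> X1 then U' a else U a)" for a
  define B'' where "B'' f = (if f \<in> Y1 then B' f else B f)" for f
  have "sem D U'' B'' v G = sem D U' B' v G"
    using X Y eq by (intro sem_cong[OF G]) (auto simp: U''_def B''_def eq_outside_def)
  moreover have "env_ok D U'' B'' v"
    using env env' by (auto simp: env_ok_def U''_def B''_def)
  moreover have "eq_outside X1 U U''" "eq_outside Y1 B B''"
    by (auto simp: eq_outside_def U''_def B''_def)
  ultimately show "sem_ex X1 Y1 D U B v G"
    using sem unfolding sem_ex_def by blast
next
  assume "sem_ex X1 Y1 D U B v G"
  with X Y show "sem_ex X Y D U B v G"
    unfolding sem_ex_def by (meson eq_outside_mono)
qed

lemma equiv_ex_Disj:
  assumes "equiv_ex X1 Y1 F1 G1" "equiv_ex X2 Y2 F2 G2" "star_free G1" "star_free G2"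
    and "X1 \<subseteq> X" "X2 \<subseteq> X" "usyms G1 \<inter> X \<subseteq> X1" "usyms G2 \<inter> X \<subseteq> X2"
    and "Y1 \<subseteq> Y" "Y2 \<subseteq> Y" "bsyms G1 \<inter> Y \<subseteq> Y1" "bsyms G2 \<inter> Y \<subseteq> Y2"
  shows "equiv_ex X Y (Disj F1 F2) (Disj G1 G2)"
  unfolding equiv_ex_def
proof (intro allI impI)
  fix D U B v assume env: "env_ok D U B v"
  have "sem D U B v (Disj F1 F2) \<longleftrightarrow> sem_ex X1 Y1 D U B v G1 \<or> sem_ex X2 Y2 D U B v G2"
    using assms(1,2) env by (simp add: equiv_ex_def)
  also have "\<dots> \<longleftrightarrow> sem_ex X Y D U B v G1 \<or> sem_ex X Y D U B v G2"
    using assms(3-) env by (simp add: sem_ex_restrict)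
  also have "\<dots> \<longleftrightarrow> sem_ex X Y D U B v (Disj G1 G2)"
    by (auto simp: sem_ex_def)
  finally show "sem D U B v (Disj F1 F2) \<longleftrightarrow> sem_ex X Y D U B v (Disj G1 G2)" .
qed

(* G1 and G2 may use private fresh symbols from X1 and X2.  Because these are
   quantified and disjoint, each side keeps its own witness for them, and the
   split of their interpretation by the star is irrelevant. *)
context
  fixes X Y X1 Y1 X2 Y2 :: "nat set" and As As1 As2 fs fs1 fs2 :: "nat list"
    and F1 F2 G1 G2 :: fm
  assumes F: "equiv_ex X1 Y1 F1 G1" "equiv_ex X2 Y2 F2 G2"
    and G: "star_free G1" "star_free G2"
    and syms: "usyms G1 \<subseteq> set As \<union> X1" "usyms G2 \<subseteq> set As \<union> X2"
      "bsyms G1 \<subseteq> set fs \<union> Y1" "bsyms G2 \<subseteq> set fs \<union> Y2"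
    and cp: "copies As As1 As2" "copies fs fs1 fs2"
    and X: "X1 \<inter> X2 = {}" "(X1 \<union> X2) \<inter> (set As \<union> set As1 \<union> set As2) = {}"
      "X1 \<union> X2 \<union> set As1 \<union> set As2 \<subseteq> X" "X \<inter> set As = {}"
    and Y: "Y1 \<inter> Y2 = {}" "(Y1 \<union> Y2) \<inter> (set fs \<union> set fs1 \<union> set fs2) = {}"
      "Y1 \<union> Y2 \<union> set fs1 \<union> set fs2 \<subseteq> Y" "Y \<inter> set fs = {}"
begin

lemma sem_ex_sep_fm_if_sem_Star:
  assumes env: "env_ok D U B v" and Star: "sem D U B v (Star F1 F2)"
  shows "sem_ex X Y D U B v (sep_fm As As1 As2 fs fs1 fs2 G1 G2)"
proof -
  obtain U1 U2 B1 B2 where sU: "splits_on UNIV U U1 U2" and sB: "splits_on UNIV B B1 B2"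
    and "sem D U1 B1 v F1" "sem D U2 B2 v F2"
    using Star unfolding sem_Star_splits_on by blast
  then have "sem_ex X1 Y1 D U1 B1 v G1" "sem_ex X2 Y2 D U2 B2 v G2"
    using F env_ok_splits_on[OF env sU sB] by (auto simp: equiv_ex_def)
  then obtain U1' B1' U2' B2' where eq: "eq_outside X1 U1 U1'" "eq_outside Y1 B1 B1'"
      "eq_outside X2 U2 U2'" "eq_outside Y2 B2 B2'"
    and env': "env_ok D U1' B1' v" "env_ok D U2' B2' v"
    and sem: "sem D U1' B1' v G1" "sem D U2' B2' v G2"
    by (auto simp: sem_ex_def)
  obtain V where V: "eq_outside X U V" "splits_on (set As) V (V \<circ> repl As As1) (V \<circ> repl As As2)"
      "\<forall>a\<in>set As \<union> X1. V (repl As As1 a) = U1' a" "\<forall>a\<in>set As \<union> X2. V (repl As As2 a) = U2' a"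
      "\<forall>a. V a \<subseteq> D"
    using copies_of_splits_on[OF cp(1) X(1-3) sU eq(1,3), of D] env env' by (auto simp: env_ok_def)
  obtain W where W: "eq_outside Y B W" "splits_on (set fs) W (W \<circ> repl fs fs1) (W \<circ> repl fs fs2)"
      "\<forall>f\<in>set fs \<union> Y1. W (repl fs fs1 f) = B1' f" "\<forall>f\<in>set fs \<union> Y2. W (repl fs fs2 f) = B2' f"
      "\<forall>f. W f \<subseteq> D \<times> D"
    using copies_of_splits_on[OF cp(2) Y(1-3) sB eq(2,4), of "D \<times> D"] env env'
    by (auto simp: env_ok_def)
  have "sem D (V \<circ> repl As As1) (W \<circ> repl fs fs1) v G1 = sem D U1' B1' v G1"
    using syms(1,3) V(3) W(3) by (intro sem_cong G) auto
  moreover have "sem D (V \<circ> repl As As2) (W \<circ> repl fs fs2) v G2 = sem D U2' B2' v G2"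
    using syms(2,4) V(4) W(4) by (intro sem_cong G) auto
  ultimately have "sem D V W v (sep_fm As As1 As2 fs fs1 fs2 G1 G2)"
    using sem_sep_fm[OF cp G V(5) W(5)] V(2) W(2) sem by simp
  moreover have "env_ok D V W v"
    using env V(5) W(5) by (simp add: env_ok_def)
  ultimately show ?thesis
    using V(1) W(1) by (auto simp: sem_ex_def)
qed

lemma sem_Star_if_sem_ex_sep_fm:
  assumes env: "env_ok D U B v" and sep: "sem_ex X Y D U B v (sep_fm As As1 As2 fs fs1 fs2 G1 G2)"
  shows "sem D U B v (Star F1 F2)"
proof -
  obtain V W where eq: "eq_outside X U V" "eq_outside Y B W" and env': "env_ok D V W v"
    and "sem D V W v (sep_fm As As1 As2 fs fs1 fs2 G1 G2)"
    using sep by (auto simp: sem_ex_def)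
  then have splits: "splits_on (set As) V (V \<circ> repl As As1) (V \<circ> repl As As2)"
      "splits_on (set fs) W (W \<circ> repl fs fs1) (W \<circ> repl fs fs2)"
    and sem: "sem D (V \<circ> repl As As1) (W \<circ> repl fs fs1) v G1"
      "sem D (V \<circ> repl As As2) (W \<circ> repl fs fs2) v G2"
    using sem_sep_fm[OF cp G] by (auto simp: env_ok_def)
  have XY: "X1 \<inter> set As = {}" "X2 \<inter> set As = {}" "Y1 \<inter> set fs = {}" "Y2 \<inter> set fs = {}"
    using X(2) Y(2) by auto
  have ranges: "\<forall>a. U a \<subseteq> D" "\<forall>a. V a \<subseteq> D" "\<forall>f. B f \<subseteq> D \<times> D" "\<forall>f. W f \<subseteq> D \<times> D"
    using env env' by (auto simp: env_ok_def)
  obtain U1 U2 U1' U2' where sU: "splits_on UNIV U U1 U2"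
    and eqU: "eq_outside X1 U1 U1'" "eq_outside X2 U2 U2'"
    and U': "\<forall>a\<in>set As \<union> X1. U1' a = V (repl As As1 a)" "\<forall>a\<in>set As \<union> X2. U2' a = V (repl As As2 a)"
      "\<forall>a. U1' a \<subseteq> D" "\<forall>a. U2' a \<subseteq> D"
    by (rule splits_on_of_copies[OF eq(1) X(4) XY(1,2) splits(1) ranges(1,2)])
  obtain B1 B2 B1' B2' where sB: "splits_on UNIV B B1 B2"
    and eqB: "eq_outside Y1 B1 B1'" "eq_outside Y2 B2 B2'"
    and B': "\<forall>f\<in>set fs \<union> Y1. B1' f = W (repl fs fs1 f)" "\<forall>f\<in>set fs \<union> Y2. B2' f = W (repl fs fs2 f)"
      "\<forall>f. B1' f \<subseteq> D \<times> D" "\<forall>f. B2' f \<subseteq> D \<times> D"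
    by (rule splits_on_of_copies[OF eq(2) Y(4) XY(3,4) splits(2) ranges(3,4)])
  have "sem D U1' B1' v G1 = sem D (V \<circ> repl As As1) (W \<circ> repl fs fs1) v G1"
    using syms(1,3) U'(1) B'(1) by (intro sem_cong G) auto
  moreover have "sem D U2' B2' v G2 = sem D (V \<circ> repl As As2) (W \<circ> repl fs fs2) v G2"
    using syms(2,4) U'(2) B'(2) by (intro sem_cong G) auto
  moreover have "env_ok D U1' B1' v" "env_ok D U2' B2' v"
    using env U'(3,4) B'(3,4) by (auto simp: env_ok_def)
  ultimately have "sem_ex X1 Y1 D U1 B1 v G1" "sem_ex X2 Y2 D U2 B2 v G2"
    using sem eqU eqB unfolding sem_ex_def by auto
  then have "sem D U1 B1 v F1" "sem D U2 B2 v F2"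
    using F env_ok_splits_on[OF env sU sB] by (simp_all add: equiv_ex_def)
  then show ?thesis
    using sU sB unfolding sem_Star_splits_on by blast
qed

lemma equiv_ex_Star_sep_fm: "equiv_ex X Y (Star F1 F2) (sep_fm As As1 As2 fs fs1 fs2 G1 G2)"
  using sem_ex_sep_fm_if_sem_Star sem_Star_if_sem_ex_sep_fm unfolding equiv_ex_def by blast

end

section \<open>The translation\<close>

lemma C2_Disj: "C2 (Disj p q) \<longleftrightarrow> C2 p \<and> C2 q"
  by (auto simp: C2_def)

lemma trans_C2_id: "C2 F \<Longrightarrow> trans k F = (F, k)"
  by (cases F) (auto simp: C2_def)

lemma trans_counter_le: "trans k F = (G, k') \<Longrightarrow> k \<le> k'"
  by (induction k F arbitrary: G k' rule: trans.induct)
    (fastforce simp: Let_def split: prod.splits if_splits)+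

lemma trans_syms:
  "trans k F = (G, k') \<Longrightarrow> usyms G \<subseteq> usyms F \<union> {k..<k'} \<and> bsyms G \<subseteq> bsyms F \<union> {k..<k'}"
proof (induction k F arbitrary: G k' rule: trans.induct)
  case (1 k p q)
  obtain G1 k1 G2 k2 where t: "trans k p = (G1, k1)" "trans k1 q = (G2, k2)"
    by fastforce
  define Lu where "Lu = sorted_list_of_set (usyms p \<union> usyms q)"
  define Lb where "Lb = sorted_list_of_set (bsyms p \<union> bsyms q)"
  define n m where "n = length Lu" and "m = length Lb"
  have G: "G = sep_fm Lu [k2..<k2+n] [k2+n..<k2+2*n] Lb [k2..<k2+m] [k2+m..<k2+2*m] G1 G2"
    and k': "k' = k2 + 2*n + 2*m"
    using "1.prems" t by (auto simp: Let_def Lu_def Lb_def n_def m_def)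
  have "k \<le> k1" "k1 \<le> k2"
    using t by (simp_all add: trans_counter_le)
  then have "usyms G1 \<union> usyms G2 \<subseteq> usyms p \<union> usyms q \<union> {k..<k2}"
    "bsyms G1 \<union> bsyms G2 \<subseteq> bsyms p \<union> bsyms q \<union> {k..<k2}"
    using "1.IH"(1)[OF t(1)] "1.IH"(2)[OF t(1)[symmetric] refl t(2)] by auto
  moreover have "set Lu = usyms p \<union> usyms q" "set Lb = bsyms p \<union> bsyms q"
    by (simp_all add: Lu_def Lb_def finite_syms)
  moreover have "usyms G \<subseteq> set Lu \<union> {k2..<k2+2*n} \<union> usyms G1 \<union> usyms G2"
    "bsyms G \<subseteq> set Lb \<union> {k2..<k2+2*m} \<union> bsyms G1 \<union> bsyms G2"
    using syms_sep_fm[of "[k2..<k2+n]" Lu "[k2+n..<k2+2*n]" "[k2..<k2+m]" Lb "[k2+m..<k2+2*m]"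
        G1 G2]
    unfolding G n_def m_def by auto
  moreover have "{k..<k2} \<union> {k2..<k2+2*n} \<subseteq> {k..<k'}" "{k..<k2} \<union> {k2..<k2+2*m} \<subseteq> {k..<k'}"
    using \<open>k \<le> k1\<close> \<open>k1 \<le> k2\<close> unfolding k' by auto
  ultimately show ?case
    unfolding usyms.simps bsyms.simps by blast
next
  case (2 k p q)
  then show ?case
    by (fastforce simp: Let_def split: prod.splits if_splits dest: trans_counter_le)
qed auto

lemma trans_C2: "inI F \<Longrightarrow> trans k F = (G, k') \<Longrightarrow> C2 G"
proof (induction F arbitrary: k G k' rule: inI.induct)
  case (base F)
  then show ?case by (simp add: trans_C2_id)
next
  case (star F1 F2)
  then show ?case
    by (auto simp: Let_def C2_sep_fm split: prod.splits)
next
  case (disj F1 F2)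
  then show ?case
    by (auto simp: Let_def C2_Disj split: prod.splits if_splits)
qed

lemma trans_Star_equiv_ex:
  assumes "trans k (Star F1 F2) = (G, k')"
    and t: "trans k F1 = (G1, k1)" "trans k1 F2 = (G2, k2)"
    and F: "usyms F1 \<union> usyms F2 \<subseteq> {..<k}" "bsyms F1 \<union> bsyms F2 \<subseteq> {..<k}"
    and IH: "equiv_ex {k..<k1} {k..<k1} F1 G1" "equiv_ex {k1..<k2} {k1..<k2} F2 G2"
    and sf: "star_free G1" "star_free G2"
  shows "equiv_ex {k..<k'} {k..<k'} (Star F1 F2) G"
proof -
  define Lu where "Lu = sorted_list_of_set (usyms F1 \<union> usyms F2)"
  define Lb where "Lb = sorted_list_of_set (bsyms F1 \<union> bsyms F2)"
  define n m where "n = length Lu" and "m = length Lb"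
  have G: "G = sep_fm Lu [k2..<k2+n] [k2+n..<k2+2*n] Lb [k2..<k2+m] [k2+m..<k2+2*m] G1 G2"
    and k': "k' = k2 + 2*n + 2*m"
    using assms(1) t by (auto simp: Let_def Lu_def Lb_def n_def m_def)
  have k: "k \<le> k1" "k1 \<le> k2"
    using t by (simp_all add: trans_counter_le)
  have Lu: "set Lu = usyms F1 \<union> usyms F2" "distinct Lu" "set Lu \<subseteq> {..<k}"
    and Lb: "set Lb = bsyms F1 \<union> bsyms F2" "distinct Lb" "set Lb \<subseteq> {..<k}"
    using F by (simp_all add: Lu_def Lb_def finite_syms)
  have "usyms G1 \<subseteq> set Lu \<union> {k..<k1}" "usyms G2 \<subseteq> set Lu \<union> {k1..<k2}"
    "bsyms G1 \<subseteq> set Lb \<union> {k..<k1}" "bsyms G2 \<subseteq> set Lb \<union> {k1..<k2}"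
    using trans_syms[OF t(1)] trans_syms[OF t(2)] Lu(1) Lb(1) by auto
  moreover have "set Lu \<subseteq> {..<k2}" "set Lb \<subseteq> {..<k2}"
    using Lu(3) Lb(3) k by auto
  then have "copies Lu [k2..<k2+n] [k2+n..<k2+2*n]" "copies Lb [k2..<k2+m] [k2+m..<k2+2*m]"
    using Lu(2) Lb(2) unfolding n_def m_def by (simp_all add: copies_upt)
  ultimately show ?thesis
    unfolding G
    by (rule equiv_ex_Star_sep_fm[OF IH sf]) (use Lu(3) Lb(3) k k' in auto)
qed

lemma trans_Disj_equiv_ex:
  assumes "trans k (Disj F1 F2) = (G, k')" "\<not> C2 (Disj F1 F2)"
    and t: "trans k F1 = (G1, k1)" "trans k1 F2 = (G2, k2)"
    and F: "usyms F1 \<union> usyms F2 \<subseteq> {..<k}" "bsyms F1 \<union> bsyms F2 \<subseteq> {..<k}"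
    and IH: "equiv_ex {k..<k1} {k..<k1} F1 G1" "equiv_ex {k1..<k2} {k1..<k2} F2 G2"
    and sf: "star_free G1" "star_free G2"
  shows "equiv_ex {k..<k'} {k..<k'} (Disj F1 F2) G"
proof -
  have G: "G = Disj G1 G2" "k' = k2"
    using assms(1,2) t by auto
  have k: "k \<le> k1" "k1 \<le> k2"
    using t by (simp_all add: trans_counter_le)
  have syms: "usyms G1 \<subseteq> usyms F1 \<union> {k..<k1}" "usyms G2 \<subseteq> usyms F2 \<union> {k1..<k2}"
    "bsyms G1 \<subseteq> bsyms F1 \<union> {k..<k1}" "bsyms G2 \<subseteq> bsyms F2 \<union> {k1..<k2}"
    using trans_syms[OF t(1)] trans_syms[OF t(2)] by auto
  show ?thesis
    unfolding G
    by (rule equiv_ex_Disj[OF IH sf]) (use F k syms in auto)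
qed

lemma trans_equiv_ex:
  "inI F \<Longrightarrow> usyms F \<subseteq> {..<k} \<Longrightarrow> bsyms F \<subseteq> {..<k} \<Longrightarrow> trans k F = (G, k') \<Longrightarrow>
   equiv_ex {k..<k'} {k..<k'} F G"
proof (induction F arbitrary: k G k' rule: inI.induct)
  case (base F)
  then show ?case by (simp add: trans_C2_id equiv_ex_refl)
next
  case (star F1 F2)
  obtain G1 k1 G2 k2 where t: "trans k F1 = (G1, k1)" "trans k1 F2 = (G2, k2)"
    by fastforce
  have "usyms F2 \<subseteq> {..<k1}" "bsyms F2 \<subseteq> {..<k1}"
    using star.prems(1,2) trans_counter_le[OF t(1)] by auto
  then have "equiv_ex {k..<k1} {k..<k1} F1 G1" "equiv_ex {k1..<k2} {k1..<k2} F2 G2"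
    using star.IH(1)[OF _ _ t(1)] star.IH(2)[OF _ _ t(2)] star.prems(1,2) by simp_all
  moreover have "star_free G1" "star_free G2"
    using trans_C2[OF star.hyps(1) t(1)] trans_C2[OF star.hyps(2) t(2)] by (simp_all add: C2_def)
  ultimately show ?case
    using trans_Star_equiv_ex[OF star.prems(3) t] star.prems(1,2) by simp
next
  case (disj F1 F2)
  show ?case
  proof (cases "C2 (Disj F1 F2)")
    case True
    with disj.prems(3) show ?thesis by (simp add: equiv_ex_refl)
  next
    case False
    obtain G1 k1 G2 k2 where t: "trans k F1 = (G1, k1)" "trans k1 F2 = (G2, k2)"
      by fastforce
    have "usyms F2 \<subseteq> {..<k1}" "bsyms F2 \<subseteq> {..<k1}"
      using disj.prems(1,2) trans_counter_le[OF t(1)] by auto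
    then have "equiv_ex {k..<k1} {k..<k1} F1 G1" "equiv_ex {k1..<k2} {k1..<k2} F2 G2"
      using disj.IH(1)[OF _ _ t(1)] disj.IH(2)[OF _ _ t(2)] disj.prems(1,2) by simp_all
    moreover have "star_free G1" "star_free G2"
      using trans_C2[OF disj.hyps(1) t(1)] trans_C2[OF disj.hyps(2) t(2)] by (simp_all add: C2_def)
    ultimately show ?thesis
      using trans_Disj_equiv_ex[OF disj.prems(3) False t] disj.prems(1,2) by simp
  qed
qed

lemma sat_Star_iff_sat_sep_fm:
  assumes "star_free F1" "star_free F2"
    and "usyms F1 \<union> usyms F2 \<subseteq> set As" "bsyms F1 \<union> bsyms F2 \<subseteq> set fs"
    and "copies As As1 As2" "copies fs fs1 fs2"
  shows "sat (Star F1 F2) \<longleftrightarrow> sat (sep_fm As As1 As2 fs fs1 fs2 F1 F2)"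
proof (rule equiv_ex_sat_iff)
  show "equiv_ex (set As1 \<union> set As2) (set fs1 \<union> set fs2) (Star F1 F2)
      (sep_fm As As1 As2 fs fs1 fs2 F1 F2)"
    by (rule equiv_ex_Star_sep_fm[OF equiv_ex_refl equiv_ex_refl])
      (use assms in \<open>auto simp: copies_def\<close>)
qed

lemma translate_C2_equisat:
  assumes "inI F"
  shows "C2 (translate F) \<and> (sat (translate F) \<longleftrightarrow> sat F)"
proof -
  define k where "k = Suc (max (Max (insert 0 (usyms F))) (Max (insert 0 (bsyms F))))"
  obtain G k' where t: "trans k F = (G, k')"
    by fastforce
  have "usyms F \<subseteq> {..<k}" "bsyms F \<subseteq> {..<k}"
    using finite_syms[of F] by (auto simp: k_def less_Suc_eq_le le_max_iff_disj)
  then have "C2 G \<and> (sat G \<longleftrightarrow> sat F)"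
    using trans_C2[OF assms t] trans_equiv_ex[OF assms _ _ t] equiv_ex_sat_iff by blast
  moreover have "translate F = G"
    using t by (simp add: translate_def k_def)
  ultimately show ?thesis by simp
qed

theorem mainTheorem12:
  shows "(\<forall>F1 F2 As As1 As2 fs fs1 fs2.
            star_free F1 \<and> star_free F2 \<and>
            usyms F1 \<union> usyms F2 \<subseteq> set As \<and> bsyms F1 \<union> bsyms F2 \<subseteq> set fs \<and>
            length As1 = length As \<and> length As2 = length As \<and>
            length fs1 = length fs \<and> length fs2 = length fs \<and>
            distinct (As @ As1 @ As2) \<and> distinct (fs @ fs1 @ fs2) \<longrightarrow>
            (sat (Star F1 F2) \<longleftrightarrow> sat (sep_fm As As1 As2 fs fs1 fs2 F1 F2)))
       \<and> (\<forall>F. inI F \<longrightarrow> C2 (translate F) \<and> (sat (translate F) \<longleftrightarrow> sat F))"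
  using sat_Star_iff_sat_sep_fm translate_C2_equisat unfolding copies_def by blast

end
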